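(* Let $(\Omega,\mathcal{A},\mathbb{P})$ be a probability space and $k\colon\Omega\times\mathbb{R}\times\mathbb{R}\to\mathbb{R}$ jointly measurable, with $|k(\omega,s,t)|\le1$ almost surely and, almost surely, $k(\omega,s,t)$ being $L_k$-Lipschitz in $s$ uniformly in $t$; suppose $K(s,t)=\mathbb{E}_\omega[k(\omega,s,t)]$ is continuous and positive definite. Let $\rho$ be a Borel probability measure on $Z=\mathbb{R}^d\times\mathbb{R}\times\mathbb{R}$ supported on $S=\{(a,b,t)\in Z:\|a\|_2\le1,\ |b|\le1,\ |t|\le1\}$, and let $H_\rho=\{x\mapsto\int_S c(a,b,t)K(\langle a,x\rangle+b,t)\,d\rho(a,b,t):c\in L^2(\rho)\}$. Let $X\subset\mathbb{R}^d$ be compact. Then for any $f\in H_\rho$, $\eta>0$ and $\delta\in(0,1)$ there exist $c^*\in C(S)$, $\epsilon>0$ and $N\in\mathbb{N}$ such that, with $z_i=(a_i,b_i,t_i)$ i.i.d. with law $\rho$ and $\omega_i$ i.i.d. with law $\mathbb{P}$, independently, $i=1,\dots,N$, and $$F_N(x)=\frac1N\sum_{i=1}^N c^*(z_i)\,k(\omega_i,\langle a_i,x\rangle+b_i,t_i),$$ one has, with probability at least $1-\delta$ over the joint draw of $\{z_i,\omega_i\}_{i=1}^N$, $$\sup_{x\in X}|F_N(x)-f(x)|<\eta.$$ *)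

theory Defs
  imports "HOL-Probability.Probability"
begin

definition pos_def_kernel :: "(real \<Rightarrow> real \<Rightarrow> real) \<Rightarrow> bool" where
  "pos_def_kernel K \<longleftrightarrow> (\<forall>s t. K s t = K t s) \<and>
     (\<forall>(n::nat) (x::nat \<Rightarrow> real) (c::nat \<Rightarrow> real).
        (\<Sum>i<n. \<Sum>j<n. c i * c j * K (x i) (x j)) \<ge> 0)"

definition S_set :: "((real^'n) \<times> real \<times> real) set" where
  "S_set = {(a, b, t). norm a \<le> 1 \<and> \<bar>b\<bar> \<le> 1 \<and> \<bar>t\<bar> \<le> 1}"

definition H_rho :: "((real^'n) \<times> real \<times> real) measure \<Rightarrow> (real \<Rightarrow> real \<Rightarrow> real)
                      \<Rightarrow> (real^'n \<Rightarrow> real) set" where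
  "H_rho \<rho> K = {f. \<exists>c. c \<in> borel_measurable \<rho> \<and> integrable \<rho> (\<lambda>z. (c z)\<^sup>2) \<and>
      (\<forall>x. f x = (LINT z:S_set|\<rho>. c z * K (fst z \<bullet> x + fst (snd z)) (snd (snd z))))}"

end

theory Submission
  imports Defs
begin

(* Approximate the coefficient c of f in L1(rho) by a bounded continuous g and let cstar be g
   restricted to S. Since |K| <= 1, the expectation of the random feature
   cstar(z) k(omega, <a,x> + b, t) differs from f(x) by at most the L1 distance of c and g,
   uniformly in x. The features are bounded and, almost surely, Lipschitz in x. By independence
   the empirical mean F_N(x) has variance O(1/N) at every x; Markov's inequality applied to the
   sum of the squared deviations over a finite net of the compact set X makes all of them small
   simultaneously with probability at least 1 - delta, and the Lipschitz bound carries this over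
   to all of X. *)

section \<open>Approximation in L1 by bounded continuous functions\<close>

lemma integral_abs_add_le:
  fixes u v :: "'a \<Rightarrow> real"
  assumes "integrable M u" "integrable M v"
  shows "(\<integral>x. \<bar>u x + v x\<bar> \<partial>M) \<le> (\<integral>x. \<bar>u x\<bar> \<partial>M) + (\<integral>x. \<bar>v x\<bar> \<partial>M)"
proof -
  have "(\<integral>x. \<bar>u x + v x\<bar> \<partial>M) \<le> (\<integral>x. \<bar>u x\<bar> + \<bar>v x\<bar> \<partial>M)"
    using assms by (intro integral_mono) auto
  also have "\<dots> = (\<integral>x. \<bar>u x\<bar> \<partial>M) + (\<integral>x. \<bar>v x\<bar> \<partial>M)"
    using assms by (intro Bochner_Integration.integral_add) auto
  finally show ?thesis .
qed

definition L1_approx_bcontinuous :: "'a::topological_space measure \<Rightarrow> ('a \<Rightarrow> real) \<Rightarrow> bool" where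
  "L1_approx_bcontinuous \<rho> c \<longleftrightarrow> (\<forall>e>0. \<exists>g B. continuous_on UNIV g \<and> (\<forall>x. \<bar>g x\<bar> \<le> B) \<and>
      integrable \<rho> (\<lambda>x. c x - g x) \<and> (\<integral>x. \<bar>c x - g x\<bar> \<partial>\<rho>) < e)"

lemma finite_measure_compact_open_approx:
  fixes \<rho> :: "'a::{second_countable_topology, complete_space} measure"
  assumes "finite_measure \<rho>" "sets \<rho> = sets borel" "A \<in> sets borel" "e > 0"
  obtains C U where "C \<subseteq> A" "compact C" "A \<subseteq> U" "open U" "measure \<rho> U - measure \<rho> C < e"
proof -
  interpret finite_measure \<rho> by fact
  have fin: "emeasure \<rho> (space \<rho>) \<noteq> \<infinity>" by simp
  obtain C where C: "C \<subseteq> A" "compact C" "measure \<rho> A < measure \<rho> C + e/2"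
  proof (cases "measure \<rho> A < e/2")
    case True
    then show ?thesis using that[of "{}"] by auto
  next
    case False
    have "ennreal (measure \<rho> A - e/2) < emeasure \<rho> A"
      using False \<open>e > 0\<close> by (simp add: emeasure_eq_measure ennreal_lessI)
    also have "\<dots> = (SUP K \<in> {K. K \<subseteq> A \<and> compact K}. emeasure \<rho> K)"
      by (rule inner_regular[OF assms(2) fin assms(3)])
    finally obtain K where K: "K \<subseteq> A" "compact K" "ennreal (measure \<rho> A - e/2) < emeasure \<rho> K"
      by (auto simp: less_SUP_iff)
    then have "measure \<rho> A - e/2 < measure \<rho> K"
      using False \<open>e > 0\<close> by (simp add: emeasure_eq_measure ennreal_less_iff)
    then show ?thesis using that[of K] K by auto
  qed
  have "(INF U \<in> {U. A \<subseteq> U \<and> open U}. emeasure \<rho> U) = emeasure \<rho> A"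
    by (rule outer_regular[OF assms(2) fin assms(3), symmetric])
  also have "\<dots> < ennreal (measure \<rho> A + e/2)"
    using \<open>e > 0\<close> by (simp add: emeasure_eq_measure ennreal_lessI)
  finally obtain U where U: "A \<subseteq> U" "open U" "emeasure \<rho> U < ennreal (measure \<rho> A + e/2)"
    by (auto simp: INF_less_iff)
  then have "measure \<rho> U < measure \<rho> A + e/2"
    by (metis emeasure_eq_measure ennreal_less_iff measure_nonneg)
  with C U(1,2) show ?thesis
    using that by force
qed

lemma L1_approx_bcontinuous_indicator:
  fixes \<rho> :: "'a::euclidean_space measure"
  assumes "finite_measure \<rho>" "sets \<rho> = sets borel" "A \<in> sets borel"
  shows "L1_approx_bcontinuous \<rho> (indicator A)"
  unfolding L1_approx_bcontinuous_def
proof (intro allI impI)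
  fix e :: real assume "e > 0"
  interpret finite_measure \<rho> by fact
  obtain C U where CU: "C \<subseteq> A" "compact C" "A \<subseteq> U" "open U" "measure \<rho> U - measure \<rho> C < e"
    using finite_measure_compact_open_approx[OF assms \<open>e > 0\<close>] .
  have "closed C" "closed (- U)" "C \<inter> - U = {}"
    using CU compact_imp_closed by auto
  then obtain g :: "'a \<Rightarrow> real" where g: "continuous_on UNIV g" "\<And>x. g x \<in> closed_segment 1 0"
    "\<And>x. x \<in> C \<Longrightarrow> g x = 1" "\<And>x. x \<in> -U \<Longrightarrow> g x = 0"
    by (rule Urysohn[of C "- U" 1 0]) auto
  have g01: "0 \<le> g x \<and> g x \<le> 1" for x
    using g(2)[of x] by (auto simp: closed_segment_eq_real_ivl)
  have gm: "g \<in> borel_measurable \<rho>"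
    using borel_measurable_continuous_onI[OF g(1)] by (simp add: measurable_cong_sets[OF assms(2) refl])
  have UC: "U \<in> sets \<rho>" "C \<in> sets \<rho>"
    using CU assms(2) by (simp_all add: compact_imp_closed borel_open borel_closed)
  have int: "integrable \<rho> (\<lambda>x. indicator A x - g x)"
    using g01 gm assms(2,3) by (intro integrable_const_bound[where B=1]) (auto simp: indicator_def)
  have "(\<integral>x. \<bar>indicator A x - g x\<bar> \<partial>\<rho>) \<le> (\<integral>x. indicator (U - C) x \<partial>\<rho>)"
    \<comment> \<open>the difference vanishes on \<open>C\<close> and outside \<open>U\<close>\<close>
    using int UC g01 g(3,4) CU
    by (intro integral_mono integrable_real_indicator) (auto simp: indicator_def emeasure_eq_measure)
  also have "\<dots> = measure \<rho> U - measure \<rho> C"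
    using UC CU by (simp add: finite_measure_Diff)
  finally show "\<exists>g B. continuous_on UNIV g \<and> (\<forall>x. \<bar>g x\<bar> \<le> B) \<and>
      integrable \<rho> (\<lambda>x. indicator A x - g x) \<and> (\<integral>x. \<bar>indicator A x - g x\<bar> \<partial>\<rho>) < e"
    using g(1) int g01 CU(5) by (intro exI[of _ g] exI[of _ 1]) auto
qed

lemma L1_approx_bcontinuous_add:
  assumes "L1_approx_bcontinuous \<rho> c1" "L1_approx_bcontinuous \<rho> c2"
  shows "L1_approx_bcontinuous \<rho> (\<lambda>x. c1 x + c2 x)"
  unfolding L1_approx_bcontinuous_def
proof (intro allI impI)
  fix e :: real assume "e > 0"
  then obtain g1 B1 g2 B2 where
      g1: "continuous_on UNIV g1" "\<forall>x. \<bar>g1 x\<bar> \<le> B1"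
        "integrable \<rho> (\<lambda>x. c1 x - g1 x)" "(\<integral>x. \<bar>c1 x - g1 x\<bar> \<partial>\<rho>) < e/2" and
      g2: "continuous_on UNIV g2" "\<forall>x. \<bar>g2 x\<bar> \<le> B2"
        "integrable \<rho> (\<lambda>x. c2 x - g2 x)" "(\<integral>x. \<bar>c2 x - g2 x\<bar> \<partial>\<rho>) < e/2"
    using assms unfolding L1_approx_bcontinuous_def by (meson half_gt_zero)
  have diff: "(c1 x + c2 x) - (g1 x + g2 x) = (c1 x - g1 x) + (c2 x - g2 x)" for x
    by simp
  have int: "integrable \<rho> (\<lambda>x. (c1 x + c2 x) - (g1 x + g2 x))"
    unfolding diff using g1(3) g2(3) by (rule Bochner_Integration.integrable_add)
  have "(\<integral>x. \<bar>(c1 x + c2 x) - (g1 x + g2 x)\<bar> \<partial>\<rho>) < e"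
    unfolding diff using integral_abs_add_le[OF g1(3) g2(3)] g1(4) g2(4) by linarith
  moreover have "\<forall>x. \<bar>g1 x + g2 x\<bar> \<le> B1 + B2"
    using g1(2) g2(2) by (meson abs_triangle_ineq add_mono order_trans)
  ultimately show "\<exists>g B. continuous_on UNIV g \<and> (\<forall>x. \<bar>g x\<bar> \<le> B) \<and>
      integrable \<rho> (\<lambda>x. (c1 x + c2 x) - g x) \<and> (\<integral>x. \<bar>(c1 x + c2 x) - g x\<bar> \<partial>\<rho>) < e"
    using g1(1) g2(1) int
    by (intro exI[of _ "\<lambda>x. g1 x + g2 x"] exI[of _ "B1 + B2"]) (auto intro: continuous_intros)
qed

lemma L1_approx_bcontinuous_cmult:
  assumes "L1_approx_bcontinuous \<rho> c"
  shows "L1_approx_bcontinuous \<rho> (\<lambda>x. a * c x)"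
  unfolding L1_approx_bcontinuous_def
proof (intro allI impI)
  fix e :: real assume "e > 0"
  then have "e / (\<bar>a\<bar> + 1) > 0" by simp
  then obtain g B where g: "continuous_on UNIV g" "\<forall>x. \<bar>g x\<bar> \<le> B"
      "integrable \<rho> (\<lambda>x. c x - g x)" "(\<integral>x. \<bar>c x - g x\<bar> \<partial>\<rho>) < e / (\<bar>a\<bar> + 1)"
    using assms unfolding L1_approx_bcontinuous_def by blast
  have diff: "a * c x - a * g x = a * (c x - g x)" for x
    by (simp add: algebra_simps)
  have int: "integrable \<rho> (\<lambda>x. a * c x - a * g x)"
    unfolding diff using g(3) by (rule integrable_mult_right)
  have "(\<integral>x. \<bar>a * c x - a * g x\<bar> \<partial>\<rho>) = \<bar>a\<bar> * (\<integral>x. \<bar>c x - g x\<bar> \<partial>\<rho>)"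
    unfolding diff by (simp add: abs_mult)
  also have "\<dots> \<le> \<bar>a\<bar> * (e / (\<bar>a\<bar> + 1))"
    using g(4) by (intro mult_left_mono) auto
  also have "\<dots> < e"
    using \<open>e > 0\<close> by (simp add: field_simps)
  finally have "(\<integral>x. \<bar>a * c x - a * g x\<bar> \<partial>\<rho>) < e" .
  moreover have "\<forall>x. \<bar>a * g x\<bar> \<le> \<bar>a\<bar> * B"
    using g(2) by (simp add: abs_mult mult_left_mono)
  ultimately show "\<exists>g B. continuous_on UNIV g \<and> (\<forall>x. \<bar>g x\<bar> \<le> B) \<and>
      integrable \<rho> (\<lambda>x. a * c x - g x) \<and> (\<integral>x. \<bar>a * c x - g x\<bar> \<partial>\<rho>) < e"
    using g(1) int
    by (intro exI[of _ "\<lambda>x. a * g x"] exI[of _ "\<bar>a\<bar> * B"]) (auto intro: continuous_intros)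
qed

lemma L1_approx_bcontinuous_sum:
  assumes "\<And>y. y \<in> F \<Longrightarrow> L1_approx_bcontinuous \<rho> (c y)"
  shows "L1_approx_bcontinuous \<rho> (\<lambda>x. \<Sum>y\<in>F. c y x)"
  using assms
proof (induction F rule: infinite_finite_induct)
  case (insert y F)
  then show ?case by (simp add: L1_approx_bcontinuous_add)
qed (auto simp: L1_approx_bcontinuous_def intro!: exI[of _ "\<lambda>_. 0"] exI[of _ 0])

lemma L1_approx_bcontinuous_simple_function:
  fixes \<rho> :: "'a::euclidean_space measure"
  assumes "finite_measure \<rho>" "sets \<rho> = sets borel" "simple_function \<rho> s"
  shows "L1_approx_bcontinuous \<rho> s"
proof -
  have sp: "space \<rho> = UNIV" using assms(2) sets_eq_imp_space_eq by fastforce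
  have fin: "finite (s ` UNIV)" using assms(3) sp by (simp add: simple_function_def)
  have "(\<lambda>x. \<Sum>y\<in>s ` UNIV. y * indicator (s -` {y}) x) = s"
  proof
    fix x
    have "(\<Sum>y\<in>s ` UNIV. y * indicator (s -` {y}) x) = (\<Sum>y\<in>s ` UNIV. if y = s x then y else 0)"
      by (intro sum.cong) (auto simp: indicator_def)
    then show "(\<Sum>y\<in>s ` UNIV. y * indicator (s -` {y}) x) = s x" using fin by simp
  qed
  moreover have "s -` {y} \<in> sets borel" for y
    using simple_functionD(2)[OF assms(3), of "{y}"] sp assms(2) by simp
  then have "L1_approx_bcontinuous \<rho> (\<lambda>x. \<Sum>y\<in>s ` UNIV. y * indicator (s -` {y}) x)"
    by (intro L1_approx_bcontinuous_sum L1_approx_bcontinuous_cmult L1_approx_bcontinuous_indicator assms(1,2))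
  ultimately show ?thesis by simp
qed

lemma L1_approx_bcontinuous_integrable:
  fixes \<rho> :: "'a::euclidean_space measure"
  assumes "finite_measure \<rho>" "sets \<rho> = sets borel" "integrable \<rho> c"
  shows "L1_approx_bcontinuous \<rho> c"
  unfolding L1_approx_bcontinuous_def
proof (intro allI impI)
  fix e :: real assume e: "e > 0"
  obtain r where "has_bochner_integral \<rho> c r" using assms(3) by (auto simp: integrable.simps)
  then obtain s where s: "\<And>i. Bochner_Integration.simple_bochner_integrable \<rho> (s i)"
      "(\<lambda>i. \<integral>\<^sup>+x. norm (c x - s i x) \<partial>\<rho>) \<longlonglongrightarrow> 0"
    by (cases rule: has_bochner_integral.cases) blast
  from order_tendstoD(2)[OF s(2), of "ennreal (e/2)"] e obtain i where
      i: "(\<integral>\<^sup>+x. norm (c x - s i x) \<partial>\<rho>) < ennreal (e/2)"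
    by (auto simp: eventually_sequentially)
  have si: "integrable \<rho> (s i)" and sf: "simple_function \<rho> (s i)"
    using s(1) by (auto intro: integrableI_simple_bochner_integrable
        simp: Bochner_Integration.simple_bochner_integrable.simps)
  have intd: "integrable \<rho> (\<lambda>x. c x - s i x)" using assms(3) si by auto
  have "ennreal (\<integral>x. \<bar>c x - s i x\<bar> \<partial>\<rho>) = (\<integral>\<^sup>+x. norm (c x - s i x) \<partial>\<rho>)"
    using intd by (subst nn_integral_eq_integral) auto
  with i have d1: "(\<integral>x. \<bar>c x - s i x\<bar> \<partial>\<rho>) < e/2"
    by (metis ennreal_less_iff integral_nonneg_AE AE_I2 abs_ge_zero)
  obtain g B where g: "continuous_on UNIV g" "\<forall>x. \<bar>g x\<bar> \<le> B"
      "integrable \<rho> (\<lambda>x. s i x - g x)" "(\<integral>x. \<bar>s i x - g x\<bar> \<partial>\<rho>) < e/2"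
    using L1_approx_bcontinuous_simple_function[OF assms(1,2) sf] e
    unfolding L1_approx_bcontinuous_def by (meson half_gt_zero)
  have diff: "c x - g x = (c x - s i x) + (s i x - g x)" for x
    by simp
  have int: "integrable \<rho> (\<lambda>x. c x - g x)"
    unfolding diff using intd g(3) by (rule Bochner_Integration.integrable_add)
  have "(\<integral>x. \<bar>c x - g x\<bar> \<partial>\<rho>) < e"
    unfolding diff using integral_abs_add_le[OF intd g(3)] d1 g(4) by linarith
  then show "\<exists>g B. continuous_on UNIV g \<and> (\<forall>x. \<bar>g x\<bar> \<le> B) \<and>
      integrable \<rho> (\<lambda>x. c x - g x) \<and> (\<integral>x. \<bar>c x - g x\<bar> \<partial>\<rho>) < e"
    using g(1,2) int by blast
qed

section \<open>Empirical means of independent samples\<close>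

lemma integral_PiM_mult_components:
  fixes Q :: "'q measure" and D :: "'q \<Rightarrow> real" and N i l :: nat
  assumes Q: "prob_space Q" and Dm: "D \<in> borel_measurable Q"
    and Db: "\<And>q. q \<in> space Q \<Longrightarrow> \<bar>D q\<bar> \<le> C" and D0: "(\<integral>q. D q \<partial>Q) = 0"
    and il: "i < N" "l < N"
  shows "(\<integral>p. D (p i) * D (p l) \<partial>PiM {..<N} (\<lambda>_. Q)) = (if i = l then (\<integral>q. (D q)\<^sup>2 \<partial>Q) else 0)"
proof -
  interpret Q: prob_space Q by fact
  interpret product_sigma_finite "\<lambda>_. Q" by unfold_locales
  define f where "f m q = (if m = i then D q else 1) * (if m = l then D q else 1)" for m q
  have intD: "integrable Q D"
    using Dm Db by (intro Q.integrable_const_bound[where B=C]) auto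
  have "\<bar>D q * D q\<bar> \<le> C * C" if "q \<in> space Q" for q
    unfolding abs_mult using Db[OF that] by (intro mult_mono) auto
  then have "integrable Q (\<lambda>q. D q * D q)"
    using Dm by (intro Q.integrable_const_bound[where B="C * C"]) auto
  then have intf: "integrable Q (f m)" for m
    unfolding f_def by (cases "m = i"; cases "m = l") (simp_all add: intD)
  have "(\<integral>p. D (p i) * D (p l) \<partial>PiM {..<N} (\<lambda>_. Q)) = (\<integral>p. (\<Prod>m<N. f m (p m)) \<partial>PiM {..<N} (\<lambda>_. Q))"
    using il by (intro Bochner_Integration.integral_cong refl) (simp add: f_def prod.distrib)
  also have "\<dots> = (\<Prod>m<N. integral\<^sup>L Q (f m))"
    by (rule product_integral_prod) (auto intro: intf)
  also have "\<dots> = (if i = l then (\<integral>q. (D q)\<^sup>2 \<partial>Q) else 0)"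
  proof (cases "i = l")
    case True
    then have "(\<Prod>m<N. integral\<^sup>L Q (f m)) = (\<Prod>m<N. if m = i then (\<integral>q. (D q)\<^sup>2 \<partial>Q) else 1)"
      by (intro prod.cong refl) (auto simp: f_def[abs_def] power2_eq_square Q.prob_space)
    then show ?thesis using True il by simp
  next
    case False
    then have "integral\<^sup>L Q (f i) = 0" using D0 by (simp add: f_def[abs_def])
    then show ?thesis using False il by (auto intro: prod_zero)
  qed
  finally show ?thesis .
qed

lemma integral_PiM_square_sum:
  fixes Q :: "'q measure" and D :: "'q \<Rightarrow> real" and N :: nat
  assumes Q: "prob_space Q" and Dm[measurable]: "D \<in> borel_measurable Q"
    and Db: "\<And>q. q \<in> space Q \<Longrightarrow> \<bar>D q\<bar> \<le> C" and D0: "(\<integral>q. D q \<partial>Q) = 0"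
  shows "integrable (PiM {..<N} (\<lambda>_. Q)) (\<lambda>p. (\<Sum>i<N. D (p i))\<^sup>2)"
    and "(\<integral>p. (\<Sum>i<N. D (p i))\<^sup>2 \<partial>PiM {..<N} (\<lambda>_. Q)) = N * (\<integral>q. (D q)\<^sup>2 \<partial>Q)"
proof -
  define P where "P = PiM {..<N} (\<lambda>_. Q)"
  interpret P: prob_space P unfolding P_def by (rule prob_space_PiM) (rule Q)
  have comp[measurable]: "(\<lambda>p. p i) \<in> measurable P Q" if "i < N" for i
    unfolding P_def using that by (intro measurable_component_singleton) auto
  have intpair: "integrable P (\<lambda>p. D (p i) * D (p l))" if "i < N" "l < N" for i l
  proof (rule P.integrable_const_bound[where B="C * C"])
    show "AE p in P. norm (D (p i) * D (p l)) \<le> C * C"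
    proof (rule AE_I2)
      fix p assume "p \<in> space P"
      then have Di: "\<bar>D (p i)\<bar> \<le> C" and Dl: "\<bar>D (p l)\<bar> \<le> C"
        using Db measurable_space[OF comp] that by auto
      show "norm (D (p i) * D (p l)) \<le> C * C"
        unfolding real_norm_def abs_mult using Di Dl order_trans[OF abs_ge_zero Di] by (intro mult_mono) auto
    qed
  qed (use that in measurable)
  have sq: "(\<Sum>i<N. D (p i))\<^sup>2 = (\<Sum>i<N. \<Sum>l<N. D (p i) * D (p l))" for p
    by (simp add: power2_eq_square sum_product)
  show "integrable (PiM {..<N} (\<lambda>_. Q)) (\<lambda>p. (\<Sum>i<N. D (p i))\<^sup>2)"
    unfolding P_def[symmetric] sq using intpair by (intro Bochner_Integration.integrable_sum) auto
  have "(\<integral>p. (\<Sum>i<N. \<Sum>l<N. D (p i) * D (p l)) \<partial>P) = (\<Sum>i<N. \<integral>p. (\<Sum>l<N. D (p i) * D (p l)) \<partial>P)"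
    by (rule Bochner_Integration.integral_sum) (auto intro!: Bochner_Integration.integrable_sum intpair)
  also have "\<dots> = (\<Sum>i<N. \<Sum>l<N. (\<integral>p. D (p i) * D (p l) \<partial>P))"
    by (intro sum.cong refl Bochner_Integration.integral_sum) (auto intro: intpair)
  also have "\<dots> = (\<Sum>i<N. \<Sum>l<N. if i = l then (\<integral>q. (D q)\<^sup>2 \<partial>Q) else 0)"
    unfolding P_def using integral_PiM_mult_components[OF Q Dm Db D0] by (intro sum.cong refl) auto
  finally show "(\<integral>p. (\<Sum>i<N. D (p i))\<^sup>2 \<partial>PiM {..<N} (\<lambda>_. Q)) = N * (\<integral>q. (D q)\<^sup>2 \<partial>Q)"
    unfolding P_def[symmetric] sq by simp
qed

lemma empirical_mean_variance_bound:
  fixes Q :: "'q measure" and \<phi> :: "'q \<Rightarrow> real" and N :: nat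
  assumes Q: "prob_space Q" and \<phi>m: "\<phi> \<in> borel_measurable Q"
    and \<phi>b: "\<And>q. q \<in> space Q \<Longrightarrow> \<bar>\<phi> q\<bar> \<le> B" and N: "N > 0"
  defines "Y \<equiv> \<lambda>p. ((1/N) * (\<Sum>i<N. \<phi> (p i)) - (\<integral>q. \<phi> q \<partial>Q))\<^sup>2"
  shows "integrable (PiM {..<N} (\<lambda>_. Q)) Y"
    and "(\<integral>p. Y p \<partial>PiM {..<N} (\<lambda>_. Q)) \<le> B\<^sup>2 / N"
proof -
  interpret Q: prob_space Q by fact
  define \<mu> where "\<mu> = (\<integral>q. \<phi> q \<partial>Q)"
  define D where "D q = \<phi> q - \<mu>" for q
  have int\<phi>: "integrable Q \<phi>"
    using \<phi>m \<phi>b by (intro Q.integrable_const_bound[where B=B]) auto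
  have \<phi>2b: "(\<phi> q)\<^sup>2 \<le> B\<^sup>2" if "q \<in> space Q" for q
    using power_mono[OF \<phi>b[OF that] abs_ge_zero, of 2] by simp
  have int\<phi>2: "integrable Q (\<lambda>q. (\<phi> q)\<^sup>2)"
    using \<phi>m \<phi>2b by (intro Q.integrable_const_bound[where B="B\<^sup>2"]) auto
  have "\<bar>\<mu>\<bar> \<le> (\<integral>q. \<bar>\<phi> q\<bar> \<partial>Q)"
    unfolding \<mu>_def by (rule integral_abs_bound)
  also have "\<dots> \<le> (\<integral>q. B \<partial>Q)"
    using int\<phi> \<phi>b by (intro integral_mono) auto
  finally have \<mu>b: "\<bar>\<mu>\<bar> \<le> B"
    by (simp add: Q.prob_space)
  have Dm: "D \<in> borel_measurable Q"
    unfolding D_def using \<phi>m by measurable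
  have Db: "\<bar>D q\<bar> \<le> 2 * B" if "q \<in> space Q" for q
    using \<phi>b[OF that] \<mu>b unfolding D_def by linarith
  have D0: "(\<integral>q. D q \<partial>Q) = 0"
    unfolding D_def \<mu>_def using int\<phi> by (simp add: Q.prob_space)
  have "(\<integral>q. (D q)\<^sup>2 \<partial>Q) = (\<integral>q. (\<phi> q)\<^sup>2 \<partial>Q) - \<mu>\<^sup>2"
    unfolding D_def \<mu>_def by (rule Q.variance_eq[OF int\<phi> int\<phi>2])
  also have "\<dots> \<le> (\<integral>q. B\<^sup>2 \<partial>Q)"
    using integral_mono[OF int\<phi>2 Q.integrable_const \<phi>2b] zero_le_power2[of \<mu>] by linarith
  finally have D2: "(\<integral>q. (D q)\<^sup>2 \<partial>Q) \<le> B\<^sup>2"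
    by (simp add: Q.prob_space)
  have Y: "Y = (\<lambda>p. (1/N)\<^sup>2 * (\<Sum>i<N. D (p i))\<^sup>2)"
  proof
    fix p
    have "(1/N) * (\<Sum>i<N. \<phi> (p i)) - \<mu> = (1/N) * (\<Sum>i<N. D (p i))"
      using N by (simp add: D_def sum_subtractf field_simps)
    then show "Y p = (1/N)\<^sup>2 * (\<Sum>i<N. D (p i))\<^sup>2"
      unfolding Y_def \<mu>_def[symmetric] by (simp add: power_divide)
  qed
  note sum_sq = integral_PiM_square_sum[OF Q Dm Db D0, of N]
  show "integrable (PiM {..<N} (\<lambda>_. Q)) Y"
    unfolding Y using sum_sq(1) by (rule integrable_mult_right)
  have "(\<integral>p. Y p \<partial>PiM {..<N} (\<lambda>_. Q)) = (1/N)\<^sup>2 * (N * (\<integral>q. (D q)\<^sup>2 \<partial>Q))"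
    unfolding Y using sum_sq(2) by simp
  also have "\<dots> \<le> (1/N)\<^sup>2 * (N * B\<^sup>2)"
    using D2 by (intro mult_left_mono) auto
  also have "\<dots> = B\<^sup>2 / N"
    using N by (simp add: power2_eq_square field_simps)
  finally show "(\<integral>p. Y p \<partial>PiM {..<N} (\<lambda>_. Q)) \<le> B\<^sup>2 / N" .
qed

lemma empirical_means_sq_deviation_sum_bound:
  fixes Q :: "'q measure" and \<phi> :: "'a \<Rightarrow> 'q \<Rightarrow> real" and N :: nat
  assumes Q: "prob_space Q"
    and \<phi>m: "\<And>y. y \<in> T \<Longrightarrow> \<phi> y \<in> borel_measurable Q"
    and \<phi>b: "\<And>y q. y \<in> T \<Longrightarrow> q \<in> space Q \<Longrightarrow> \<bar>\<phi> y q\<bar> \<le> B" and N: "N > 0"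
  defines "SS \<equiv> \<lambda>p. \<Sum>y\<in>T. ((1/N) * (\<Sum>i<N. \<phi> y (p i)) - (\<integral>q. \<phi> y q \<partial>Q))\<^sup>2"
  shows "integrable (PiM {..<N} (\<lambda>_. Q)) SS"
    and "(\<integral>p. SS p \<partial>PiM {..<N} (\<lambda>_. Q)) \<le> card T * (B\<^sup>2 / N)"
proof -
  define Y where "Y y p = ((1/N) * (\<Sum>i<N. \<phi> y (p i)) - (\<integral>q. \<phi> y q \<partial>Q))\<^sup>2" for y p
  have Yint: "integrable (PiM {..<N} (\<lambda>_. Q)) (Y y)"
    and YE: "(\<integral>p. Y y p \<partial>PiM {..<N} (\<lambda>_. Q)) \<le> B\<^sup>2 / N" if "y \<in> T" for y
    using empirical_mean_variance_bound[OF Q \<phi>m \<phi>b N] that unfolding Y_def by auto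
  show "integrable (PiM {..<N} (\<lambda>_. Q)) SS"
    unfolding SS_def Y_def[symmetric] using Yint by auto
  have "(\<integral>p. SS p \<partial>PiM {..<N} (\<lambda>_. Q)) = (\<Sum>y\<in>T. (\<integral>p. Y y p \<partial>PiM {..<N} (\<lambda>_. Q)))"
    unfolding SS_def Y_def[symmetric] using Yint by (simp add: Bochner_Integration.integral_sum)
  also have "\<dots> \<le> card T * (B\<^sup>2 / N)"
    using YE by (rule sum_bounded_above)
  finally show "(\<integral>p. SS p \<partial>PiM {..<N} (\<lambda>_. Q)) \<le> card T * (B\<^sup>2 / N)" .
qed

lemma empirical_means_close_on_finite_set:
  fixes Q :: "'q measure" and \<phi> :: "'a \<Rightarrow> 'q \<Rightarrow> real"
  assumes Q: "prob_space Q" and T: "finite T"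
    and \<phi>m: "\<And>y. y \<in> T \<Longrightarrow> \<phi> y \<in> borel_measurable Q"
    and \<phi>b: "\<And>y q. y \<in> T \<Longrightarrow> q \<in> space Q \<Longrightarrow> \<bar>\<phi> y q\<bar> \<le> B"
    and \<tau>: "\<tau> > 0" and \<delta>: "\<delta> > 0"
  shows "\<exists>N::nat. N > 0 \<and> (\<exists>A \<in> sets (PiM {..<N} (\<lambda>_. Q)). 1 - \<delta> \<le> measure (PiM {..<N} (\<lambda>_. Q)) A \<and>
           (\<forall>p\<in>A. \<forall>y\<in>T. \<bar>(1 / real N) * (\<Sum>i<N. \<phi> y (p i)) - (\<integral>q. \<phi> y q \<partial>Q)\<bar> < \<tau>))"
proof -
  define N where "N = nat \<lceil>B\<^sup>2 * card T / (\<delta> * \<tau>\<^sup>2)\<rceil> + 1"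
  have N: "N > 0" unfolding N_def by simp
  have "B\<^sup>2 * card T / (\<delta> * \<tau>\<^sup>2) \<le> N"
    unfolding N_def by linarith
  then have N_large: "card T * (B\<^sup>2 / N) / \<tau>\<^sup>2 \<le> \<delta>"
    using N \<tau> \<delta> by (simp add: field_simps)
  define P where "P = PiM {..<N} (\<lambda>_. Q)"
  interpret P: prob_space P unfolding P_def by (rule prob_space_PiM) (rule Q)
  define Y where "Y y p = ((1/N) * (\<Sum>i<N. \<phi> y (p i)) - (\<integral>q. \<phi> y q \<partial>Q))\<^sup>2" for y p
  define SS where "SS p = (\<Sum>y\<in>T. Y y p)" for p
  note SS_bound = empirical_means_sq_deviation_sum_bound[where T=T and \<phi>=\<phi>, OF Q \<phi>m \<phi>b N,
      folded P_def Y_def SS_def]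
  define A where "A = {p\<in>space P. SS p < \<tau>\<^sup>2}"
  have SSm[measurable]: "SS \<in> borel_measurable P"
    using SS_bound(1) by auto
  have A: "A \<in> sets P"
    unfolding A_def by measurable
  have "measure P {p\<in>space P. \<tau>\<^sup>2 \<le> SS p} \<le> (\<integral>p. SS p \<partial>P) / \<tau>\<^sup>2"
    using \<tau> by (intro integral_Markov_inequality_measure[OF SS_bound(1) sets.top])
      (auto simp: SS_def Y_def intro!: AE_I2 sum_nonneg)
  also have "\<dots> \<le> \<delta>"
    using SS_bound(2) N_large \<tau> by (smt (verit) divide_right_mono zero_le_power2)
  finally have bad: "measure P {p\<in>space P. \<tau>\<^sup>2 \<le> SS p} \<le> \<delta>" .
  have "A = space P - {p\<in>space P. \<tau>\<^sup>2 \<le> SS p}"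
    unfolding A_def by auto
  then have "measure P A = 1 - measure P {p\<in>space P. \<tau>\<^sup>2 \<le> SS p}"
    by (simp only:) (rule P.prob_compl, measurable)
  with bad have "1 - \<delta> \<le> measure P A"
    by linarith
  moreover have "\<bar>(1/N) * (\<Sum>i<N. \<phi> y (p i)) - (\<integral>q. \<phi> y q \<partial>Q)\<bar> < \<tau>" if "p \<in> A" "y \<in> T" for p y
  proof -
    have "Y y p \<le> SS p"
      unfolding SS_def using that(2) T by (intro member_le_sum) (auto simp: Y_def)
    with that(1) have "Y y p < \<tau>\<^sup>2"
      unfolding A_def by simp
    then have "\<bar>(1/N) * (\<Sum>i<N. \<phi> y (p i)) - (\<integral>q. \<phi> y q \<partial>Q)\<bar>\<^sup>2 < \<tau>\<^sup>2"
      unfolding Y_def by (simp only: power2_abs)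
    then show ?thesis
      using \<tau> by (rule power2_less_imp_less[OF _ less_imp_le])
  qed
  ultimately show ?thesis
    using N A unfolding P_def by blast
qed

lemma abs_mean_diff_le:
  fixes a b :: "nat \<Rightarrow> real"
  assumes "N > 0" "\<And>i. i < N \<Longrightarrow> \<bar>a i - b i\<bar> \<le> e"
  shows "\<bar>(1 / real N) * (\<Sum>i<N. a i) - (1 / real N) * (\<Sum>i<N. b i)\<bar> \<le> e"
proof -
  have "(1 / real N) * (\<Sum>i<N. a i) - (1 / real N) * (\<Sum>i<N. b i) = (1 / real N) * (\<Sum>i<N. a i - b i)"
    by (simp add: sum_subtractf right_diff_distrib)
  then have "\<bar>(1 / real N) * (\<Sum>i<N. a i) - (1 / real N) * (\<Sum>i<N. b i)\<bar> = (1 / real N) * \<bar>\<Sum>i<N. a i - b i\<bar>"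
    by (simp only: abs_mult) simp
  also have "\<dots> \<le> (1 / real N) * (\<Sum>i<N. e)"
    using assms(2) by (intro mult_left_mono order_trans[OF sum_abs sum_mono]) auto
  finally show ?thesis
    using assms(1) by simp
qed

lemma (in prob_space) abs_integral_diff_le:
  fixes a b :: "'a \<Rightarrow> real"
  assumes "integrable M a" "integrable M b" "\<And>x. x \<in> space M \<Longrightarrow> \<bar>a x - b x\<bar> \<le> e"
  shows "\<bar>(\<integral>x. a x \<partial>M) - (\<integral>x. b x \<partial>M)\<bar> \<le> e"
proof -
  have "(\<integral>x. a x \<partial>M) - (\<integral>x. b x \<partial>M) = (\<integral>x. a x - b x \<partial>M)"
    using assms(1,2) by simp
  then have "\<bar>(\<integral>x. a x \<partial>M) - (\<integral>x. b x \<partial>M)\<bar> \<le> (\<integral>x. \<bar>a x - b x\<bar> \<partial>M)"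
    using integral_abs_bound by metis
  also have "\<dots> \<le> e"
    using assms by (intro integral_le_const) (auto intro!: AE_I2)
  finally show ?thesis .
qed

lemma Lipschitz_close_on_net:
  fixes u v :: "'a::metric_space \<Rightarrow> real"
  assumes u: "\<And>x y. x \<in> X \<Longrightarrow> y \<in> X \<Longrightarrow> \<bar>u x - u y\<bar> \<le> C * dist x y"
    and v: "\<And>x y. x \<in> X \<Longrightarrow> y \<in> X \<Longrightarrow> \<bar>v x - v y\<bar> \<le> C * dist x y"
    and "C \<ge> 0" and T: "T \<subseteq> X" "X \<subseteq> (\<Union>y\<in>T. ball y r)"
    and close: "\<And>y. y \<in> T \<Longrightarrow> \<bar>u y - v y\<bar> < e" and "x \<in> X"
  shows "\<bar>u x - v x\<bar> < e + 2 * C * r"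
proof -
  obtain y where y: "y \<in> T" "dist y x < r"
    using T(2) \<open>x \<in> X\<close> by auto
  have "C * dist x y \<le> C * r"
    using y(2) \<open>C \<ge> 0\<close> by (simp add: dist_commute mult_left_mono)
  then show ?thesis
    using u[of x y] v[of x y] close[OF y(1)] T(1) y(1) \<open>x \<in> X\<close> by (auto simp: abs_le_iff abs_less_iff)
qed

lemma empirical_means_uniformly_close_Lipschitz:
  fixes Q :: "'q measure" and \<phi> :: "'a::metric_space \<Rightarrow> 'q \<Rightarrow> real"
  assumes Q: "prob_space Q" and X: "compact X"
    and \<phi>m: "\<And>x. \<phi> x \<in> borel_measurable Q"
    and \<phi>b: "\<And>x q. x \<in> X \<Longrightarrow> q \<in> space Q \<Longrightarrow> \<bar>\<phi> x q\<bar> \<le> B"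
    and \<phi>L: "\<And>x y q. x \<in> X \<Longrightarrow> y \<in> X \<Longrightarrow> q \<in> space Q \<Longrightarrow> \<bar>\<phi> x q - \<phi> y q\<bar> \<le> C * dist x y"
    and "C \<ge> 0" and \<tau>: "\<tau> > 0" and \<delta>: "\<delta> > 0"
  shows "\<exists>N::nat. N > 0 \<and> (\<exists>A \<in> sets (PiM {..<N} (\<lambda>_. Q)). 1 - \<delta> \<le> measure (PiM {..<N} (\<lambda>_. Q)) A \<and>
           (\<forall>p\<in>A. \<forall>x\<in>X. \<bar>(1 / real N) * (\<Sum>i<N. \<phi> x (p i)) - (\<integral>q. \<phi> x q \<partial>Q)\<bar> < \<tau>))"
proof -
  interpret Q: prob_space Q by fact
  define r where "r = \<tau> / (3 * (C + 1))"
  have r: "r > 0" "\<tau> / 3 + 2 * C * r \<le> \<tau>"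
    using \<tau> \<open>C \<ge> 0\<close> by (auto simp: r_def field_simps)
  obtain T where T: "T \<subseteq> X" "finite T" "X \<subseteq> (\<Union>y\<in>T. ball y r)"
    using compactE_image[OF X, of X "\<lambda>y. ball y r"] r(1) by force
  obtain N A where N: "N > 0" and A: "A \<in> sets (PiM {..<N} (\<lambda>_. Q))"
      "1 - \<delta> \<le> measure (PiM {..<N} (\<lambda>_. Q)) A"
      "\<And>p y. p \<in> A \<Longrightarrow> y \<in> T \<Longrightarrow> \<bar>(1 / real N) * (\<Sum>i<N. \<phi> y (p i)) - (\<integral>q. \<phi> y q \<partial>Q)\<bar> < \<tau> / 3"
    using empirical_means_close_on_finite_set[OF Q T(2), where \<phi>=\<phi> and B=B and \<tau>="\<tau> / 3" and \<delta>=\<delta>]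
      \<phi>m \<phi>b T(1) \<tau> \<delta> by (auto simp: subset_iff)
  have "\<bar>(1 / real N) * (\<Sum>i<N. \<phi> x (p i)) - (\<integral>q. \<phi> x q \<partial>Q)\<bar> < \<tau>" if "p \<in> A" "x \<in> X" for p x
  proof -
    have pQ: "p i \<in> space Q" if "i < N" for i
      using sets.sets_into_space[OF A(1)] \<open>p \<in> A\<close> that by (auto simp: space_PiM)
    have "\<bar>(1 / real N) * (\<Sum>i<N. \<phi> x (p i)) - (\<integral>q. \<phi> x q \<partial>Q)\<bar> < \<tau> / 3 + 2 * C * r"
    proof (rule Lipschitz_close_on_net[OF _ _ \<open>C \<ge> 0\<close> T(1,3) A(3)[OF \<open>p \<in> A\<close>] \<open>x \<in> X\<close>])
      show "\<bar>(1 / real N) * (\<Sum>i<N. \<phi> x (p i)) - (1 / real N) * (\<Sum>i<N. \<phi> y (p i))\<bar> \<le> C * dist x y"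
        if "x \<in> X" "y \<in> X" for x y
        using N by (rule abs_mean_diff_le) (simp add: \<phi>L that pQ)
      have "integrable Q (\<phi> x)" if "x \<in> X" for x
        using \<phi>m \<phi>b[OF that] by (intro Q.integrable_const_bound[where B=B]) auto
      then show "\<bar>(\<integral>q. \<phi> x q \<partial>Q) - (\<integral>q. \<phi> y q \<partial>Q)\<bar> \<le> C * dist x y" if "x \<in> X" "y \<in> X" for x y
        using that \<phi>L[OF that] by (intro Q.abs_integral_diff_le) auto
    qed
    with r(2) show ?thesis
      by linarith
  qed
  with N A(1,2) show ?thesis
    by blast
qed

lemma PiM_avoiding_null_set:
  fixes Q :: "'q measure" and N :: nat
  assumes Q: "prob_space Q" and Z: "Z \<in> null_sets Q" and A: "A \<in> sets (PiM {..<N} (\<lambda>_. Q))"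
  defines "A' \<equiv> A \<inter> {p \<in> space (PiM {..<N} (\<lambda>_. Q)). \<forall>i\<in>{..<N}. p i \<notin> Z}"
  shows "A' \<in> sets (PiM {..<N} (\<lambda>_. Q))" and "measure (PiM {..<N} (\<lambda>_. Q)) A' = measure (PiM {..<N} (\<lambda>_. Q)) A"
proof -
  define P where "P = PiM {..<N} (\<lambda>_. Q)"
  have [measurable]: "Z \<in> sets Q"
    using Z by blast
  have [measurable]: "(\<lambda>p. p i) \<in> measurable P Q" if "i \<in> {..<N}" for i
    unfolding P_def using that by (intro measurable_component_singleton)
  show A': "A' \<in> sets (PiM {..<N} (\<lambda>_. Q))"
    unfolding A'_def P_def[symmetric] using A[folded P_def] by measurable
  have "AE p in P. \<forall>i\<in>{..<N}. p i \<notin> Z"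
    unfolding P_def by (intro AE_finite_allI AE_PiM_component Q AE_not_in Z) auto
  then have "AE p in P. p \<in> A' \<longleftrightarrow> p \<in> A"
    using AE_space by eventually_elim (auto simp: A'_def P_def)
  then show "measure (PiM {..<N} (\<lambda>_. Q)) A' = measure (PiM {..<N} (\<lambda>_. Q)) A"
    using A' A unfolding P_def by (rule measure_eq_AE)
qed

lemma empirical_means_uniformly_close_Lipschitz_AE:
  fixes Q :: "'q measure" and \<phi> :: "'a::metric_space \<Rightarrow> 'q \<Rightarrow> real"
  assumes Q: "prob_space Q" and X: "compact X"
    and \<phi>m: "\<And>x. \<phi> x \<in> borel_measurable Q"
    and \<phi>b: "AE q in Q. \<forall>x\<in>X. \<bar>\<phi> x q\<bar> \<le> B"
    and \<phi>L: "AE q in Q. \<forall>x\<in>X. \<forall>y\<in>X. \<bar>\<phi> x q - \<phi> y q\<bar> \<le> C * dist x y"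
    and "C \<ge> 0" and \<tau>: "\<tau> > 0" and \<delta>: "\<delta> > 0"
  shows "\<exists>N::nat. N > 0 \<and> (\<exists>A \<in> sets (PiM {..<N} (\<lambda>_. Q)). 1 - \<delta> \<le> measure (PiM {..<N} (\<lambda>_. Q)) A \<and>
           (\<forall>p\<in>A. \<forall>x\<in>X. \<bar>(1 / real N) * (\<Sum>i<N. \<phi> x (p i)) - (\<integral>q. \<phi> x q \<partial>Q)\<bar> < \<tau>))"
proof -
  interpret Q: prob_space Q by fact
  obtain Z where Z: "Z \<in> null_sets Q"
    and good: "\<And>q. q \<in> space Q - Z \<Longrightarrow> (\<forall>x\<in>X. \<bar>\<phi> x q\<bar> \<le> B) \<and> (\<forall>x\<in>X. \<forall>y\<in>X. \<bar>\<phi> x q - \<phi> y q\<bar> \<le> C * dist x y)"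
    using AE_conjI[OF \<phi>b \<phi>L] by (rule AE_E3) blast
  \<comment> \<open>cut the family off to \<open>0\<close> on the null set \<open>Z\<close>, where it may be unbounded\<close>
  define \<psi> where "\<psi> x q = indicator (space Q - Z) q * \<phi> x q" for x q
  have "Z \<in> sets Q"
    using Z by blast
  then have \<psi>m: "\<psi> x \<in> borel_measurable Q" for x
    unfolding \<psi>_def using \<phi>m by measurable
  have "AE q in Q. q \<in> space Q - Z"
    using AE_not_in[OF Z] AE_space by eventually_elim auto
  then have E\<psi>: "(\<integral>q. \<psi> x q \<partial>Q) = (\<integral>q. \<phi> x q \<partial>Q)" for x
    by (intro integral_cong_AE \<psi>m \<phi>m) (auto simp: \<psi>_def elim: eventually_mono)
  have "\<bar>\<psi> x q\<bar> \<le> \<bar>B\<bar>" if "x \<in> X" "q \<in> space Q" for x q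
    using good[of q] that abs_ge_self[of B] by (auto simp: \<psi>_def indicator_def) (meson order_trans)
  moreover have "\<bar>\<psi> x q - \<psi> y q\<bar> \<le> C * dist x y" if "x \<in> X" "y \<in> X" "q \<in> space Q" for x y q
    using good[of q] that \<open>C \<ge> 0\<close> by (auto simp: \<psi>_def indicator_def)
  ultimately have "\<exists>N::nat. N > 0 \<and> (\<exists>A \<in> sets (PiM {..<N} (\<lambda>_. Q)). 1 - \<delta> \<le> measure (PiM {..<N} (\<lambda>_. Q)) A \<and>
      (\<forall>p\<in>A. \<forall>x\<in>X. \<bar>(1 / real N) * (\<Sum>i<N. \<psi> x (p i)) - (\<integral>q. \<psi> x q \<partial>Q)\<bar> < \<tau>))"
    by (rule empirical_means_uniformly_close_Lipschitz[OF Q X \<psi>m _ _ \<open>C \<ge> 0\<close> \<tau> \<delta>])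
  then obtain N A where "N > 0" and A: "A \<in> sets (PiM {..<N} (\<lambda>_. Q))"
      "1 - \<delta> \<le> measure (PiM {..<N} (\<lambda>_. Q)) A"
      "\<forall>p\<in>A. \<forall>x\<in>X. \<bar>(1 / real N) * (\<Sum>i<N. \<psi> x (p i)) - (\<integral>q. \<psi> x q \<partial>Q)\<bar> < \<tau>"
    by blast
  define A' where "A' = A \<inter> {p \<in> space (PiM {..<N} (\<lambda>_. Q)). \<forall>i\<in>{..<N}. p i \<notin> Z}"
  have close: "\<bar>(1 / real N) * (\<Sum>i<N. \<phi> x (p i)) - (\<integral>q. \<phi> x q \<partial>Q)\<bar> < \<tau>" if "p \<in> A'" "x \<in> X" for p x
  proof -
    have "(\<Sum>i<N. \<psi> x (p i)) = (\<Sum>i<N. \<phi> x (p i))"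
      using \<open>p \<in> A'\<close> by (intro sum.cong) (auto simp: \<psi>_def A'_def space_PiM PiE_iff)
    moreover have "\<bar>(1 / real N) * (\<Sum>i<N. \<psi> x (p i)) - (\<integral>q. \<psi> x q \<partial>Q)\<bar> < \<tau>"
      using A(3) \<open>p \<in> A'\<close> \<open>x \<in> X\<close> by (auto simp: A'_def)
    ultimately show ?thesis
      unfolding E\<psi> by (simp only:)
  qed
  have "A' \<in> sets (PiM {..<N} (\<lambda>_. Q))" "1 - \<delta> \<le> measure (PiM {..<N} (\<lambda>_. Q)) A'"
    using PiM_avoiding_null_set[OF Q Z A(1)] A(2) unfolding A'_def by auto
  with \<open>N > 0\<close> close show ?thesis
    by blast
qed

section \<open>Random features\<close>

(* A sample q = ((a, b, t), \<omega>) of \<rho> \<Otimes> M gives the feature c(a, b, t) k(\<omega>, <a, x> + b, t). *)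
definition random_feature ::
    "((real^'n) \<times> real \<times> real \<Rightarrow> real) \<Rightarrow> ('w \<Rightarrow> real \<Rightarrow> real \<Rightarrow> real) \<Rightarrow> real^'n
      \<Rightarrow> ((real^'n) \<times> real \<times> real) \<times> 'w \<Rightarrow> real" where
  "random_feature c k x q = c (fst q) * k (snd q) (fst (fst q) \<bullet> x + fst (snd (fst q))) (snd (snd (fst q)))"

lemma closed_S_set: "closed S_set"
proof -
  have "S_set = {z :: (real^'n) \<times> real \<times> real. norm (fst z) \<le> 1 \<and> \<bar>fst (snd z)\<bar> \<le> 1 \<and> \<bar>snd (snd z)\<bar> \<le> 1}"
    by (auto simp: S_set_def)
  also have "closed \<dots>"
    by (intro closed_Collect_conj closed_Collect_le continuous_intros)
  finally show ?thesis .
qed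

lemma random_feature_measurable:
  fixes x :: "real^'n"
  assumes k: "(\<lambda>(\<omega>, s, t). k \<omega> s t) \<in> borel_measurable (M \<Otimes>\<^sub>M (borel \<Otimes>\<^sub>M borel))"
    and c: "c \<in> borel_measurable borel" and \<rho>: "sets \<rho> = sets borel"
  shows "random_feature c k x \<in> borel_measurable (\<rho> \<Otimes>\<^sub>M M)"
proof -
  define s where "s z = fst z \<bullet> x + fst (snd z)" for z :: "(real^'n) \<times> real \<times> real"
  define t where "t z = snd (snd z)" for z :: "(real^'n) \<times> real \<times> real"
  have [measurable]: "s \<in> borel_measurable borel" "t \<in> borel_measurable borel"
    unfolding s_def t_def by (intro borel_measurable_continuous_onI continuous_intros)+
  have "(\<lambda>q. (snd q, s (fst q), t (fst q))) \<in> measurable (borel \<Otimes>\<^sub>M M) (M \<Otimes>\<^sub>M (borel \<Otimes>\<^sub>M borel))"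
    by measurable
  from measurable_compose[OF this k]
  have "(\<lambda>q. k (snd q) (s (fst q)) (t (fst q))) \<in> borel_measurable (borel \<Otimes>\<^sub>M M)"
    by simp
  with c have "random_feature c k x \<in> borel_measurable (borel \<Otimes>\<^sub>M M)"
    unfolding random_feature_def s_def t_def by measurable
  then show ?thesis
    using measurable_cong_sets[OF sets_pair_measure_cong[OF \<rho> refl] refl] by blast
qed

lemma Lipschitz_constant_nonneg:
  fixes h :: "real \<Rightarrow> real"
  assumes "\<And>s s'. \<bar>h s - h s'\<bar> \<le> L * \<bar>s - s'\<bar>"
  shows "0 \<le> L"
  using assms[of 1 0] abs_ge_zero[of "h 1 - h 0"] by simp

lemma random_feature_Lipschitz:
  assumes c0: "\<And>z. z \<notin> S_set \<Longrightarrow> c z = 0" and cb: "\<And>z. \<bar>c z\<bar> \<le> B"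
    and kL: "\<And>s s' t. \<bar>k \<omega> s t - k \<omega> s' t\<bar> \<le> L * \<bar>s - s'\<bar>"
  shows "\<bar>random_feature c k x (z, \<omega>) - random_feature c k y (z, \<omega>)\<bar> \<le> B * L * dist x y"
proof -
  obtain a b t where z: "z = (a, b, t)"
    by (metis prod.collapse)
  have L: "0 \<le> L"
    using kL by (rule Lipschitz_constant_nonneg)
  have B: "0 \<le> B"
    using cb[of z] by linarith
  show ?thesis
  proof (cases "z \<in> S_set")
    case True
    then have "norm a \<le> 1"
      by (simp add: z S_set_def)
    then have "\<bar>a \<bullet> x - a \<bullet> y\<bar> \<le> dist x y"
      unfolding dist_norm inner_diff_right[symmetric]
      by (metis Cauchy_Schwarz_ineq2 mult_left_le_one_le norm_ge_zero order_trans)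
    then have "\<bar>k \<omega> (a \<bullet> x + b) t - k \<omega> (a \<bullet> y + b) t\<bar> \<le> L * dist x y"
      using kL[of "a \<bullet> x + b" t "a \<bullet> y + b"] mult_left_mono[OF _ L] by fastforce
    then have "\<bar>c z\<bar> * \<bar>k \<omega> (a \<bullet> x + b) t - k \<omega> (a \<bullet> y + b) t\<bar> \<le> B * (L * dist x y)"
      using cb[of z] B by (intro mult_mono) auto
    then show ?thesis
      by (simp add: random_feature_def z abs_mult right_diff_distrib[symmetric] mult.assoc)
  next
    case False
    then show ?thesis
      using B L by (simp add: random_feature_def c0)
  qed
qed

lemma AE_pair_measure_snd:
  assumes "sigma_finite_measure M" "AE \<omega> in M. P \<omega>"
  shows "AE q in N \<Otimes>\<^sub>M M. P (snd q)"
proof -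
  interpret sigma_finite_measure M by fact
  obtain Z where P: "\<And>\<omega>. \<omega> \<in> space M - Z \<Longrightarrow> P \<omega>" and Z: "Z \<in> null_sets M"
    using assms(2) by (rule AE_E3) blast
  have "space N \<times> Z \<in> null_sets (N \<Otimes>\<^sub>M M)"
    using Z by (intro times_in_null_sets2) auto
  from AE_not_in[OF this] AE_space show ?thesis
    by eventually_elim (auto simp: space_pair_measure intro: P)
qed

lemma integral_random_feature:
  fixes c :: "(real^'n) \<times> real \<times> real \<Rightarrow> real"
  assumes M: "prob_space M" and \<rho>: "prob_space \<rho>" "sets \<rho> = sets borel"
    and k: "(\<lambda>(\<omega>, s, t). k \<omega> s t) \<in> borel_measurable (M \<Otimes>\<^sub>M (borel \<Otimes>\<^sub>M borel))"
    and kb: "AE \<omega> in M. \<forall>s t. \<bar>k \<omega> s t\<bar> \<le> 1"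
    and c: "c \<in> borel_measurable borel" "\<And>z. \<bar>c z\<bar> \<le> B"
  shows "(\<integral>q. random_feature c k x q \<partial>(\<rho> \<Otimes>\<^sub>M M))
           = (\<integral>z. c z * (\<integral>\<omega>. k \<omega> (fst z \<bullet> x + fst (snd z)) (snd (snd z)) \<partial>M) \<partial>\<rho>)"
proof -
  interpret M: prob_space M by fact
  interpret \<rho>: prob_space \<rho> by fact
  interpret pair_sigma_finite \<rho> M by unfold_locales
  interpret \<rho>M: prob_space "\<rho> \<Otimes>\<^sub>M M" by (rule prob_space_pair[OF \<rho>(1) M])
  have rfm[measurable]: "random_feature c k x \<in> borel_measurable (\<rho> \<Otimes>\<^sub>M M)"
    by (rule random_feature_measurable[OF k c(1) \<rho>(2)])
  have "AE q in \<rho> \<Otimes>\<^sub>M M. \<forall>s t. \<bar>k (snd q) s t\<bar> \<le> 1"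
    using kb by (intro AE_pair_measure_snd) unfold_locales
  then have "AE q in \<rho> \<Otimes>\<^sub>M M. \<bar>random_feature c k x q\<bar> \<le> B"
    by eventually_elim (auto simp: random_feature_def abs_mult intro: order_trans[OF mult_left_le c(2)])
  then have "integrable (\<rho> \<Otimes>\<^sub>M M) (random_feature c k x)"
    by (intro \<rho>M.integrable_const_bound[where B=B]) auto
  then have "(\<integral>q. random_feature c k x q \<partial>(\<rho> \<Otimes>\<^sub>M M)) = (\<integral>z. (\<integral>\<omega>. random_feature c k x (z, \<omega>) \<partial>M) \<partial>\<rho>)"
    by (rule integral_fst'[symmetric])
  then show ?thesis
    by (simp add: random_feature_def)
qed

lemma abs_integral_weighted_diff_le:
  fixes a b w :: "'a \<Rightarrow> real"
  assumes "integrable M a" "integrable M b" "w \<in> borel_measurable M" "\<And>x. \<bar>w x\<bar> \<le> 1"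
  shows "\<bar>(\<integral>x. a x * w x \<partial>M) - (\<integral>x. b x * w x \<partial>M)\<bar> \<le> (\<integral>x. \<bar>a x - b x\<bar> \<partial>M)"
proof -
  have intw: "integrable M (\<lambda>x. u x * w x)" if "integrable M u" for u
  proof (rule Bochner_Integration.integrable_bound[OF that])
    show "(\<lambda>x. u x * w x) \<in> borel_measurable M"
      using that assms(3) by measurable
    show "AE x in M. norm (u x * w x) \<le> norm (u x)"
      using assms(4) by (auto simp: abs_mult mult_left_le)
  qed
  have int: "integrable M (\<lambda>x. (a x - b x) * w x)"
    using assms(1,2) by (intro intw) auto
  have "(\<integral>x. a x * w x \<partial>M) - (\<integral>x. b x * w x \<partial>M) = (\<integral>x. (a x - b x) * w x \<partial>M)"
    using intw[OF assms(1)] intw[OF assms(2)] by (simp add: left_diff_distrib)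
  also have "\<bar>\<dots>\<bar> \<le> (\<integral>x. \<bar>(a x - b x) * w x\<bar> \<partial>M)"
    by (rule integral_abs_bound)
  also have "\<dots> \<le> (\<integral>x. \<bar>a x - b x\<bar> \<partial>M)"
    using integrable_abs[OF int] assms by (intro integral_mono) (auto simp: abs_mult mult_left_le)
  finally show ?thesis .
qed

lemma (in prob_space) abs_integral_le_AE_bound:
  fixes f :: "'a \<Rightarrow> real"
  assumes "f \<in> borel_measurable M" "AE x in M. \<bar>f x\<bar> \<le> c"
  shows "\<bar>\<integral>x. f x \<partial>M\<bar> \<le> c"
proof -
  have "integrable M f"
    using assms by (intro integrable_const_bound[where B=c]) auto
  have "\<bar>\<integral>x. f x \<partial>M\<bar> \<le> (\<integral>x. \<bar>f x\<bar> \<partial>M)"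
    by (rule integral_abs_bound)
  also have "\<dots> \<le> c"
    using assms(2) \<open>integrable M f\<close> by (intro integral_le_const) auto
  finally show ?thesis .
qed

lemma integral_random_feature_approx:
  fixes c g :: "(real^'n) \<times> real \<times> real \<Rightarrow> real"
  assumes M: "prob_space M" and \<rho>: "prob_space \<rho>" "sets \<rho> = sets borel"
    and k: "(\<lambda>(\<omega>, s, t). k \<omega> s t) \<in> borel_measurable (M \<Otimes>\<^sub>M (borel \<Otimes>\<^sub>M borel))"
    and kb: "AE \<omega> in M. \<forall>s t. \<bar>k \<omega> s t\<bar> \<le> 1"
    and K: "\<And>s t. K s t = (\<integral>\<omega>. k \<omega> s t \<partial>M)" "continuous_on UNIV (\<lambda>(s, t). K s t)"
    and c: "integrable \<rho> c" and g: "g \<in> borel_measurable borel" "\<And>z. \<bar>g z\<bar> \<le> B"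
  shows "\<bar>(LINT z:S_set|\<rho>. c z * K (fst z \<bullet> x + fst (snd z)) (snd (snd z)))
           - (\<integral>q. random_feature (\<lambda>z. indicator S_set z * g z) k x q \<partial>(\<rho> \<Otimes>\<^sub>M M))\<bar>
         \<le> (\<integral>z. \<bar>c z - g z\<bar> \<partial>\<rho>)"
proof -
  interpret M: prob_space M by fact
  interpret \<rho>: prob_space \<rho> by fact
  have S[measurable]: "S_set \<in> sets (borel :: ((real^'n) \<times> real \<times> real) measure)"
    by (rule borel_closed[OF closed_S_set])
  have Kb: "\<bar>K s t\<bar> \<le> 1" for s t
  proof -
    have "(\<lambda>\<omega>. (\<lambda>(\<omega>, s, t). k \<omega> s t) (\<omega>, s, t)) \<in> borel_measurable M"
      using k by measurable
    with kb show ?thesis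
      unfolding K(1) by (intro M.abs_integral_le_AE_bound) auto
  qed
  have meas_\<rho>: "f \<in> borel_measurable \<rho> \<longleftrightarrow> f \<in> borel_measurable borel" for f :: "_ \<Rightarrow> real"
    unfolding measurable_cong_sets[OF \<rho>(2) refl] ..
  define Kx where "Kx z = K (fst z \<bullet> x + fst (snd z)) (snd (snd z))" for z :: "(real^'n) \<times> real \<times> real"
  define w where "w z = indicator S_set z * Kx z" for z
  have "continuous_on UNIV (\<lambda>z. (\<lambda>(s, t). K s t) (fst z \<bullet> x + fst (snd z), snd (snd z)))"
    by (rule continuous_on_compose2[OF K(2)]) (auto intro!: continuous_intros)
  then have [measurable]: "Kx \<in> borel_measurable borel"
    unfolding Kx_def by (intro borel_measurable_continuous_onI) simp
  have wm: "w \<in> borel_measurable \<rho>"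
    unfolding meas_\<rho> w_def by measurable
  have wb: "\<bar>w z\<bar> \<le> 1" for z
    using Kb by (simp add: w_def Kx_def indicator_def)
  have B0: "0 \<le> B"
    using g(2)[of undefined] by linarith
  have gi: "integrable \<rho> g"
    using g unfolding meas_\<rho>[symmetric] by (intro \<rho>.integrable_const_bound[where B=B]) auto
  have "(LINT z:S_set|\<rho>. c z * K (fst z \<bullet> x + fst (snd z)) (snd (snd z))) = (\<integral>z. c z * w z \<partial>\<rho>)"
    unfolding set_lebesgue_integral_def w_def Kx_def by (simp add: mult_ac)
  moreover have "(\<integral>q. random_feature (\<lambda>z. indicator S_set z * g z) k x q \<partial>(\<rho> \<Otimes>\<^sub>M M)) = (\<integral>z. g z * w z \<partial>\<rho>)"
    using g B0 by (subst integral_random_feature[OF M \<rho> k kb, where B=B])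
      (auto simp: K(1) w_def Kx_def mult_ac indicator_def)
  ultimately show ?thesis
    using abs_integral_weighted_diff_le[OF c gi wm wb] by simp
qed

lemma random_feature_means_uniformly_close:
  fixes c :: "(real^'n) \<times> real \<times> real \<Rightarrow> real" and X :: "(real^'n) set"
  assumes M: "prob_space M" and \<rho>: "prob_space \<rho>" "sets \<rho> = sets borel"
    and k: "(\<lambda>(\<omega>, s, t). k \<omega> s t) \<in> borel_measurable (M \<Otimes>\<^sub>M (borel \<Otimes>\<^sub>M borel))"
    and kb: "AE \<omega> in M. \<forall>s t. \<bar>k \<omega> s t\<bar> \<le> 1"
    and kL: "AE \<omega> in M. \<forall>s s' t. \<bar>k \<omega> s t - k \<omega> s' t\<bar> \<le> L * \<bar>s - s'\<bar>"
    and c: "c \<in> borel_measurable borel" "\<And>z. \<bar>c z\<bar> \<le> B" "\<And>z. z \<notin> S_set \<Longrightarrow> c z = 0"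
    and X: "compact X" and \<tau>: "\<tau> > 0" and \<delta>: "\<delta> > 0"
  shows "\<exists>N::nat. N > 0 \<and> (\<exists>A \<in> sets (PiM {..<N} (\<lambda>_. \<rho> \<Otimes>\<^sub>M M)).
           1 - \<delta> \<le> measure (PiM {..<N} (\<lambda>_. \<rho> \<Otimes>\<^sub>M M)) A \<and>
           (\<forall>p\<in>A. \<forall>x\<in>X. \<bar>(1 / real N) * (\<Sum>i<N. random_feature c k x (p i))
              - (\<integral>q. random_feature c k x q \<partial>(\<rho> \<Otimes>\<^sub>M M))\<bar> < \<tau>))"
proof (rule empirical_means_uniformly_close_Lipschitz_AE[OF prob_space_pair[OF \<rho>(1) M] X])
  interpret M: prob_space M by fact
  have good: "AE q in \<rho> \<Otimes>\<^sub>M M. (\<forall>s t. \<bar>k (snd q) s t\<bar> \<le> 1) \<and>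
      (\<forall>s s' t. \<bar>k (snd q) s t - k (snd q) s' t\<bar> \<le> L * \<bar>s - s'\<bar>)"
    using AE_conjI[OF kb kL] by (intro AE_pair_measure_snd) unfold_locales
  show "random_feature c k x \<in> borel_measurable (\<rho> \<Otimes>\<^sub>M M)" for x
    using k c(1) \<rho>(2) by (rule random_feature_measurable)
  show "AE q in \<rho> \<Otimes>\<^sub>M M. \<forall>x\<in>X. \<bar>random_feature c k x q\<bar> \<le> B"
    using good by eventually_elim
      (auto simp: random_feature_def abs_mult intro: order_trans[OF mult_left_le c(2)])
  show "AE q in \<rho> \<Otimes>\<^sub>M M. \<forall>x\<in>X. \<forall>y\<in>X. \<bar>random_feature c k x q - random_feature c k y q\<bar> \<le> B * L * dist x y"
    using good by eventually_elim (auto intro: random_feature_Lipschitz c)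
  have "AE \<omega> in M. 0 \<le> L"
    using kL
  proof eventually_elim
    case (elim \<omega>)
    then show "0 \<le> L"
      by (intro Lipschitz_constant_nonneg[of "\<lambda>s. k \<omega> s 0"]) blast
  qed
  then have "0 \<le> L"
    by simp
  then show "0 \<le> B * L"
    using c(2)[of undefined] by simp
qed (use \<tau> \<delta> in auto)

lemma random_feature_means_approx_H_rho:
  fixes c g :: "(real^'n) \<times> real \<times> real \<Rightarrow> real" and X :: "(real^'n) set"
  assumes M: "prob_space M" and \<rho>: "prob_space \<rho>" "sets \<rho> = sets borel"
    and k: "(\<lambda>(\<omega>, s, t). k \<omega> s t) \<in> borel_measurable (M \<Otimes>\<^sub>M (borel \<Otimes>\<^sub>M borel))"
    and kb: "AE \<omega> in M. \<forall>s t. \<bar>k \<omega> s t\<bar> \<le> 1"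
    and kL: "AE \<omega> in M. \<forall>s s' t. \<bar>k \<omega> s t - k \<omega> s' t\<bar> \<le> L * \<bar>s - s'\<bar>"
    and K: "\<And>s t. K s t = (\<integral>\<omega>. k \<omega> s t \<partial>M)" "continuous_on UNIV (\<lambda>(s, t). K s t)"
    and c: "integrable \<rho> c" and g: "continuous_on UNIV g" "\<And>z. \<bar>g z\<bar> \<le> B"
    and X: "compact X" and \<tau>: "\<tau> > 0" and \<delta>: "\<delta> > 0"
  shows "\<exists>N::nat. N > 0 \<and> (\<exists>A \<in> sets (PiM {..<N} (\<lambda>_. \<rho> \<Otimes>\<^sub>M M)).
           1 - \<delta> \<le> measure (PiM {..<N} (\<lambda>_. \<rho> \<Otimes>\<^sub>M M)) A \<and>
           (\<forall>p\<in>A. \<forall>x\<in>X. \<bar>(1 / real N) * (\<Sum>i<N. random_feature (\<lambda>z. indicator S_set z * g z) k x (p i))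
              - (LINT z:S_set|\<rho>. c z * K (fst z \<bullet> x + fst (snd z)) (snd (snd z)))\<bar>
              < \<tau> + (\<integral>z. \<bar>c z - g z\<bar> \<partial>\<rho>)))"
proof -
  define c' where "c' = (\<lambda>z. indicator S_set z * g z)"
  have g_meas: "g \<in> borel_measurable borel"
    using g(1) by (rule borel_measurable_continuous_onI)
  have c'_meas: "c' \<in> borel_measurable borel"
    unfolding c'_def using g_meas
    by (intro borel_measurable_times borel_measurable_indicator borel_closed closed_S_set)
  have c'_bound: "\<bar>c' z\<bar> \<le> B" for z
    using g(2)[of z] by (auto simp: c'_def indicator_def intro: order_trans[OF abs_ge_zero])
  have c'_S: "c' z = 0" if "z \<notin> S_set" for z
    using that by (simp add: c'_def)
  obtain N A where "N > 0" and A: "A \<in> sets (PiM {..<N} (\<lambda>_. \<rho> \<Otimes>\<^sub>M M))"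
      "1 - \<delta> \<le> measure (PiM {..<N} (\<lambda>_. \<rho> \<Otimes>\<^sub>M M)) A"
      "\<forall>p\<in>A. \<forall>x\<in>X. \<bar>(1 / real N) * (\<Sum>i<N. random_feature c' k x (p i))
          - (\<integral>q. random_feature c' k x q \<partial>(\<rho> \<Otimes>\<^sub>M M))\<bar> < \<tau>"
    using random_feature_means_uniformly_close[OF M \<rho> k kb kL c'_meas c'_bound c'_S X \<tau> \<delta>] by blast
  have "\<bar>(1 / real N) * (\<Sum>i<N. random_feature c' k x (p i))
          - (LINT z:S_set|\<rho>. c z * K (fst z \<bullet> x + fst (snd z)) (snd (snd z)))\<bar> < \<tau> + (\<integral>z. \<bar>c z - g z\<bar> \<partial>\<rho>)"
    if "p \<in> A" "x \<in> X" for p x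
  proof -
    have "\<bar>(LINT z:S_set|\<rho>. c z * K (fst z \<bullet> x + fst (snd z)) (snd (snd z)))
        - (\<integral>q. random_feature c' k x q \<partial>(\<rho> \<Otimes>\<^sub>M M))\<bar> \<le> (\<integral>z. \<bar>c z - g z\<bar> \<partial>\<rho>)"
      unfolding c'_def using M \<rho> k kb K c g_meas g(2) by (rule integral_random_feature_approx)
    moreover have "\<bar>(1 / real N) * (\<Sum>i<N. random_feature c' k x (p i))
        - (\<integral>q. random_feature c' k x q \<partial>(\<rho> \<Otimes>\<^sub>M M))\<bar> < \<tau>"
      using A(3) that by blast
    ultimately show ?thesis
      unfolding abs_less_iff abs_le_iff by linarith
  qed
  with \<open>N > 0\<close> A(1,2) show ?thesis
    unfolding c'_def by blast
qed

theorem corollary13: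
  fixes M :: "'w measure"
    and k :: "'w \<Rightarrow> real \<Rightarrow> real \<Rightarrow> real"
    and L :: real
    and K :: "real \<Rightarrow> real \<Rightarrow> real"
    and \<rho> :: "((real^'n) \<times> real \<times> real) measure"
    and X :: "(real^'n) set"
    and f :: "real^'n \<Rightarrow> real"
    and \<eta> \<delta> :: real
  assumes "prob_space M"
    and "(\<lambda>(\<omega>, s, t). k \<omega> s t) \<in> borel_measurable (M \<Otimes>\<^sub>M (borel \<Otimes>\<^sub>M borel))"
    and "AE \<omega> in M. \<forall>s t. \<bar>k \<omega> s t\<bar> \<le> 1"
    and "AE \<omega> in M. \<forall>s s' t. \<bar>k \<omega> s t - k \<omega> s' t\<bar> \<le> L * \<bar>s - s'\<bar>"
    and "\<And>s t. K s t = (\<integral>\<omega>. k \<omega> s t \<partial>M)"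
    and "continuous_on UNIV (\<lambda>(s, t). K s t)"
    and "pos_def_kernel K"
    and "prob_space \<rho>"
    and "sets \<rho> = sets borel"
    and "measure \<rho> S_set = 1"
    and "compact X"
    and "f \<in> H_rho \<rho> K"
    and "\<eta> > 0"
    and "0 < \<delta>" and "\<delta> < 1"
  shows "\<exists>cstar :: (real^'n) \<times> real \<times> real \<Rightarrow> real. \<exists>\<epsilon>::real. \<exists>N::nat.
           continuous_on S_set cstar \<and> \<epsilon> > 0 \<and> N > 0 \<and>
           (\<exists>A \<in> sets (PiM {..<N} (\<lambda>_. \<rho> \<Otimes>\<^sub>M M)).
              measure (PiM {..<N} (\<lambda>_. \<rho> \<Otimes>\<^sub>M M)) A \<ge> 1 - \<delta> \<and>
              (\<forall>p \<in> A. \<exists>\<eta>' < \<eta>. \<forall>x \<in> X.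
                 \<bar>(1 / real N) * (\<Sum>i<N. cstar (fst (p i)) *
                      k (snd (p i)) (fst (fst (p i)) \<bullet> x + fst (snd (fst (p i))))
                                    (snd (snd (fst (p i)))))
                  - f x\<bar> \<le> \<eta>'))"
proof -
  interpret \<rho>: prob_space \<rho> by fact
  obtain c where c: "c \<in> borel_measurable \<rho>" "integrable \<rho> (\<lambda>z. (c z)\<^sup>2)"
    and f: "\<And>x. f x = (LINT z:S_set|\<rho>. c z * K (fst z \<bullet> x + fst (snd z)) (snd (snd z)))"
    using assms(12) unfolding H_rho_def by blast
  have c_int: "integrable \<rho> c"
    using c by (rule \<rho>.square_integrable_imp_integrable)
  have "\<eta> / 2 > 0"
    using assms(13) by simp
  then obtain g B where g: "continuous_on UNIV g" "\<forall>z. \<bar>g z\<bar> \<le> B" "(\<integral>z. \<bar>c z - g z\<bar> \<partial>\<rho>) < \<eta> / 2"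
    using L1_approx_bcontinuous_integrable[OF \<rho>.finite_measure_axioms assms(9) c_int]
    unfolding L1_approx_bcontinuous_def by blast
  define cstar where "cstar = (\<lambda>z. indicator S_set z * g z)"
  have "continuous_on S_set cstar"
    using g(1) by (rule continuous_on_eq[OF continuous_on_subset]) (auto simp: cstar_def)
  moreover obtain N A where "N > 0" "A \<in> sets (PiM {..<N} (\<lambda>_. \<rho> \<Otimes>\<^sub>M M))"
      "1 - \<delta> \<le> measure (PiM {..<N} (\<lambda>_. \<rho> \<Otimes>\<^sub>M M)) A"
      "\<forall>p\<in>A. \<forall>x\<in>X. \<bar>(1 / real N) * (\<Sum>i<N. random_feature cstar k x (p i)) - f x\<bar>
          < \<eta> / 2 + (\<integral>z. \<bar>c z - g z\<bar> \<partial>\<rho>)"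
    using random_feature_means_approx_H_rho[OF assms(1,8,9,2,3,4,5,6) c_int g(1) spec[OF g(2)] assms(11)
        \<open>\<eta> / 2 > 0\<close> assms(14)]
    unfolding f[symmetric] cstar_def[symmetric] by blast
  moreover have "\<eta> / 2 + (\<integral>z. \<bar>c z - g z\<bar> \<partial>\<rho>) < \<eta>"
    using g(3) by simp
  ultimately show ?thesis
    unfolding random_feature_def
    by (intro exI[of _ cstar] exI[of _ "1::real"] exI[of _ N]) (auto intro!: bexI[of _ A] exI[of _ "\<eta> / 2 + _"] less_imp_le)
qed

end
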